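(* Let $L$ be a subsemifield of $\mathbb{R}_\mathrm{max}$ containing $\mathbb{Z}_\mathrm{max}$ which is finitely generated as a $\mathbb{Z}_\mathrm{max}$-semimodule. Then there exists a positive integer $n$ such that $L=(\frac{1}{n}\mathbb{Z})_\mathrm{max}$.
   Context: For a totally ordered abelian group $M$, $M_\mathrm{max}=M\cup\{-\infty\}$ is the idempotent semifield whose addition is $\max$ and whose multiplication is the group operation of $M$ (extended by $-\infty$ being absorbing). Thus $\mathbb{R}_\mathrm{max}$, $\mathbb{Z}_\mathrm{max}$ and $(\frac{1}{n}\mathbb{Z})_\mathrm{max}$ arise from the subgroups $\mathbb{R}\supseteq\frac1n\mathbb{Z}\supseteq\mathbb{Z}$, and $\mathbb{Z}_\mathrm{max}\subseteq(\frac1n\mathbb{Z})_\mathrm{max}\subseteq\mathbb{R}_\mathrm{max}$. *)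

theory Defs
  imports Complex_Main
begin

text \<open>The idempotent semifield R_max = R \<union> {-\<infinity>}, modelled as real option,
  where None stands for -\<infinity>. Semifield addition is max, multiplication is +.\<close>

type_synonym rmax = "real option"

definition mx_add :: "rmax \<Rightarrow> rmax \<Rightarrow> rmax" where
  "mx_add a b = (case a of None \<Rightarrow> b
      | Some x \<Rightarrow> (case b of None \<Rightarrow> Some x | Some y \<Rightarrow> Some (max x y)))"

definition mx_mul :: "rmax \<Rightarrow> rmax \<Rightarrow> rmax" where
  "mx_mul a b = (case a of None \<Rightarrow> None
      | Some x \<Rightarrow> (case b of None \<Rightarrow> None | Some y \<Rightarrow> Some (x + y)))"

definition mx_inv :: "rmax \<Rightarrow> rmax" where
  "mx_inv a = map_option uminus a"

text \<open>Zero is -\<infinity> (None), one is the real number 0.\<close>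
definition subsemifield :: "rmax set \<Rightarrow> bool" where
  "subsemifield L \<longleftrightarrow> None \<in> L \<and> Some 0 \<in> L
     \<and> (\<forall>a\<in>L. \<forall>b\<in>L. mx_add a b \<in> L)
     \<and> (\<forall>a\<in>L. \<forall>b\<in>L. mx_mul a b \<in> L)
     \<and> (\<forall>a\<in>L. a \<noteq> None \<longrightarrow> mx_inv a \<in> L)"

definition Mmax :: "real set \<Rightarrow> rmax set" where
  "Mmax M = insert None (Some ` M)"

definition Zmax :: "rmax set" where
  "Zmax = Mmax (range real_of_int)"

definition frac_Zmax :: "nat \<Rightarrow> rmax set" where
  "frac_Zmax n = Mmax {real_of_int k / real n | k. True}"

definition mx_lincomb :: "rmax list \<Rightarrow> rmax list \<Rightarrow> rmax" where
  "mx_lincomb cs gs = foldr mx_add (map2 mx_mul cs gs) None"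

definition fin_gen_Zmax_semimodule :: "rmax set \<Rightarrow> bool" where
  "fin_gen_Zmax_semimodule L \<longleftrightarrow>
     (\<exists>gs. set gs \<subseteq> L \<and>
        (\<forall>x\<in>L. \<exists>cs. length cs = length gs \<and> set cs \<subseteq> Zmax \<and> x = mx_lincomb cs gs))"

end

theory Submission
  imports Defs
begin

text \<open>The finite parts of L form an additive subgroup M of the reals containing the integers.
  Finite generation over Z_max means every element of M is an integer translate of one of
  finitely many generators, so M meets (0,1] in only finitely many points. Hence M has a
  least positive element m, which generates M; as 1 \<in> M, m = 1/n for a positive integer n.\<close>

definition add_subgroup :: "'a::ab_group_add set \<Rightarrow> bool" where
  "add_subgroup M \<longleftrightarrow> 0 \<in> M \<and> (\<forall>a\<in>M. \<forall>b\<in>M. a + b \<in> M) \<and> (\<forall>a\<in>M. - a \<in> M)"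

lemma add_subgroup_of_nat_mult:
  fixes M :: "'a::ring_1 set"
  assumes "add_subgroup M" and "a \<in> M"
  shows "of_nat n * a \<in> M"
proof (induction n)
  case 0
  then show ?case using assms(1) by (simp add: add_subgroup_def)
next
  case (Suc n)
  then show ?case using assms by (simp add: add_subgroup_def algebra_simps)
qed

lemma add_subgroup_of_int_mult:
  fixes M :: "'a::ring_1 set"
  assumes "add_subgroup M" and "a \<in> M"
  shows "of_int j * a \<in> M"
proof (cases "j \<ge> 0")
  case True
  then have "of_int j * a = of_nat (nat j) * a" by simp
  then show ?thesis using add_subgroup_of_nat_mult[OF assms] by simp
next
  case False
  then have "of_int j * a = - (of_nat (nat (- j)) * a)" by simp
  then show ?thesis using add_subgroup_of_nat_mult[OF assms] assms(1)
    by (simp add: add_subgroup_def)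
qed

lemma add_subgroup_diff:
  assumes "add_subgroup M" and "a \<in> M" and "b \<in> M"
  shows "a - b \<in> M"
  using assms unfolding add_subgroup_def by (metis diff_conv_add_uminus)

lemma add_subgroup_eq_int_multiples:
  fixes M :: "'a::floor_ceiling set"
  assumes M: "add_subgroup M" and m: "m \<in> M" "0 < m"
    and least: "\<And>x. x \<in> M \<Longrightarrow> 0 < x \<Longrightarrow> m \<le> x"
  shows "M = range (\<lambda>j. of_int j * m)"
proof
  show "M \<subseteq> range (\<lambda>j. of_int j * m)"
  proof
    fix x assume x: "x \<in> M"
    define j where "j = \<lfloor>x / m\<rfloor>"
    have "of_int j * m \<le> x"
      unfolding j_def by (rule pos_le_divide_eq[OF m(2), THEN iffD1, OF of_int_floor_le])
    moreover have "x < (of_int j + 1) * m"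
      using floor_correct[of "x / m"] m(2) by (simp add: j_def pos_divide_less_eq)
    moreover have "x - of_int j * m \<in> M"
      using add_subgroup_diff[OF M x add_subgroup_of_int_mult[OF M m(1)]] .
    ultimately have "x - of_int j * m = 0"
      using least[of "x - of_int j * m"] by (force simp: algebra_simps)
    then show "x \<in> range (\<lambda>j. of_int j * m)" by auto
  qed
  show "range (\<lambda>j. of_int j * m) \<subseteq> M"
    using add_subgroup_of_int_mult[OF M m(1)] by auto
qed

lemma add_subgroup_eq_fractions:
  fixes M :: "real set"
  assumes M: "add_subgroup M" and one: "1 \<in> M" and fin: "finite (M \<inter> {0<..1})"
  shows "\<exists>n>0. M = {real_of_int k / real n | k. True}"
proof -
  define m where "m = Min (M \<inter> {0<..1})"
  have "m \<in> M \<inter> {0<..1}"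
    unfolding m_def using fin one by (intro Min_in) auto
  then have mM: "m \<in> M" and m0: "0 < m" and m1: "m \<le> 1" by auto
  have least: "m \<le> x" if "x \<in> M" "0 < x" for x
    using that m1 fin by (cases "x \<le> 1") (auto simp: m_def)
  have M_eq: "M = range (\<lambda>j. of_int j * m)"
    using add_subgroup_eq_int_multiples[OF M mM m0 least] .
  then obtain k :: int where k: "1 = of_int k * m" using one by auto
  then have "k > 0" using m0 by (metis of_int_0_less_iff zero_less_mult_pos2 zero_less_one)
  then have "m = 1 / real (nat k)" using k by (simp add: eq_divide_eq mult.commute)
  then have "M = {real_of_int j / real (nat k) | j. True}" using M_eq by auto
  then show ?thesis using \<open>k > 0\<close> by (intro exI[of _ "nat k"]) auto
qed

lemma finite_unit_interval_if_int_translates: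
  fixes M G :: "real set"
  assumes "finite G" and M: "M \<subseteq> {of_int k + g | k g. g \<in> G}"
  shows "finite (M \<inter> {0<..1})"
proof (rule finite_subset)
  show "M \<inter> {0<..1} \<subseteq> insert 1 (frac ` G)"
  proof
    fix x assume x: "x \<in> M \<inter> {0<..1}"
    then obtain k g where "g \<in> G" "x = of_int k + g" using M by blast
    then have "x < 1 \<Longrightarrow> x = frac g" using x frac_eq_id[of x] by auto
    then show "x \<in> insert 1 (frac ` G)" using \<open>g \<in> G\<close> x by force
  qed
qed (simp add: assms(1))

lemma mx_mul_Some [simp]: "mx_mul (Some a) (Some b) = Some (a + b)"
  by (simp add: mx_mul_def)

lemma mx_inv_Some [simp]: "mx_inv (Some a) = Some (- a)"
  by (simp add: mx_inv_def)

lemma mx_add_eq_Some: "mx_add a b = Some x \<Longrightarrow> a = Some x \<or> b = Some x"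
  by (auto simp: mx_add_def max_def split: option.splits if_splits)

lemma mx_lincomb_eq_Some:
  assumes "mx_lincomb cs gs = Some x" and "set cs \<subseteq> Zmax"
  shows "\<exists>k g. Some g \<in> set gs \<and> x = of_int k + g"
  using assms unfolding mx_lincomb_def
proof (induction cs gs rule: list_induct2')
  case (4 c cs g gs)
  then consider "mx_mul c g = Some x" | "foldr mx_add (map2 mx_mul cs gs) None = Some x"
    using mx_add_eq_Some by fastforce
  then show ?case
  proof cases
    case 1
    moreover have "c \<in> Zmax" using "4.prems" by simp
    ultimately show ?thesis
      by (auto simp: mx_mul_def Zmax_def Mmax_def split: option.splits)
  next
    case 2
    then show ?thesis using "4" by auto
  qed
qed auto

lemma fin_gen_Zmax_semimodule_int_translates:
  assumes "fin_gen_Zmax_semimodule L"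
  shows "\<exists>G. finite G \<and> {x. Some x \<in> L} \<subseteq> {of_int k + g | k g. g \<in> G}"
proof -
  obtain gs where gen: "\<forall>y\<in>L. \<exists>cs. set cs \<subseteq> Zmax \<and> y = mx_lincomb cs gs"
    using assms unfolding fin_gen_Zmax_semimodule_def by blast
  have "{x. Some x \<in> L} \<subseteq> {of_int k + g | k g. g \<in> the ` set gs}"
  proof
    fix x assume "x \<in> {x. Some x \<in> L}"
    then obtain cs where "set cs \<subseteq> Zmax" "mx_lincomb cs gs = Some x"
      using gen by force
    then obtain k g where "Some g \<in> set gs" "x = of_int k + g"
      using mx_lincomb_eq_Some by blast
    then show "x \<in> {of_int k + g | k g. g \<in> the ` set gs}"
      by (force intro: rev_image_eqI)
  qed
  then show ?thesis by blast
qed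

lemma subsemifield_add_subgroup:
  assumes "subsemifield L"
  shows "add_subgroup {x. Some x \<in> L}"
proof -
  have "Some (a + b) \<in> L" if "Some a \<in> L" "Some b \<in> L" for a b
    using assms that unfolding subsemifield_def by (metis mx_mul_Some)
  moreover have "Some (- a) \<in> L" if "Some a \<in> L" for a
    using assms that unfolding subsemifield_def by (metis mx_inv_Some option.distinct(1))
  ultimately show ?thesis
    using assms by (simp add: add_subgroup_def subsemifield_def)
qed

lemma subsemifield_eq_Mmax:
  assumes "subsemifield L"
  shows "L = Mmax {x. Some x \<in> L}"
proof -
  have "y \<in> L \<longleftrightarrow> y \<in> Mmax {x. Some x \<in> L}" for y
    using assms by (cases y) (auto simp: Mmax_def subsemifield_def)
  then show ?thesis by blast
qed

theorem mainTheorem8: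
  fixes L :: "rmax set"
  assumes "subsemifield L"
    and "Zmax \<subseteq> L"
    and "fin_gen_Zmax_semimodule L"
  shows "\<exists>n::nat. n > 0 \<and> L = frac_Zmax n"
proof -
  let ?M = "{x. Some x \<in> L}"
  have "1 \<in> ?M" using assms(2) by (force simp: Zmax_def Mmax_def)
  moreover obtain G where "finite G" "?M \<subseteq> {of_int k + g | k g. g \<in> G}"
    using fin_gen_Zmax_semimodule_int_translates[OF assms(3)] by blast
  ultimately obtain n where "n > 0" "?M = {real_of_int k / real n | k. True}"
    using add_subgroup_eq_fractions[OF subsemifield_add_subgroup[OF assms(1)]]
      finite_unit_interval_if_int_translates by blast
  then show ?thesis
    using subsemifield_eq_Mmax[OF assms(1)] by (auto simp: frac_Zmax_def)
qed

end
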